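(* Let $G$ be a weak FI-group, let $H\lhd G$ be a normal weak FI-subgroup, and fix $N\geq 0$. Then $H^{\leq N}$ is a normal weak FI-subgroup of $G$.
   Context: $\mathrm{FI}$ is the category of finite subsets of $\mathbb{N}$ and injections. For groups $A,B$, a homomorphism-modulo-conjugacy $A\to B$ is an equivalence class of homomorphisms under post-composition with conjugations by elements of $B$. A weak FI-group $G$ consists of: groups $G_I$ for finite $I\subset\mathbb{N}$; for each injection $f\colon I\hookrightarrow J$ a homomorphism-modulo-conjugacy $G_f\colon G_I\to G_J$ with $G_{\mathrm{id}}=\mathrm{id}$ and $G_{g\circ f}=G_g\circ G_f$ modulo conjugacy; and for each $I\subset J$ a homomorphism $G_I^J\colon G_I\to G_J$ representing $G_f$ for the inclusion $f$, with $G_J^K\circ G_I^J=G_I^K$. A normal weak FI-subgroup $H\lhd G$ is a choice of normal subgroups $H_I\lhd G_I$ with $G_f(H_I)\subset H_J$ for every injection $f\colon I\hookrightarrow J$. For $I\subset J$ set $H_J(I)=G_I^J(H_I)$. For $N\geq 0$ and finite $J$, $H^{\leq N}_J$ is the subgroup of $G_J$ generated by the $G_J$-conjugates of the subgroups $H_J(I)$ for $I\subset J$ with $|I|\leq N$. *)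

theory Defs
  imports "HOL-Algebra.Algebra" "HOL-Library.FuncSet"
begin

text \<open>Groups are HOL-Algebra groups; all groups G I share one element type 'a.
  A homomorphism-modulo-conjugacy is represented by a representative homomorphism;
  equalities of homomorphisms-modulo-conjugacy become "conjugate" relations.\<close>

definition conj_equiv :: "('a, 'm) monoid_scheme \<Rightarrow> ('b, 'n) monoid_scheme
    \<Rightarrow> ('a \<Rightarrow> 'b) \<Rightarrow> ('a \<Rightarrow> 'b) \<Rightarrow> bool" where
  "conj_equiv A B \<phi> \<psi> \<longleftrightarrow>
     (\<exists>b\<in>carrier B. \<forall>x\<in>carrier A. \<psi> x = b \<otimes>\<^bsub>B\<^esub> \<phi> x \<otimes>\<^bsub>B\<^esub> inv\<^bsub>B\<^esub> b)"

definition FI_inj :: "(nat \<Rightarrow> nat) \<Rightarrow> nat set \<Rightarrow> nat set \<Rightarrow> bool" where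
  "FI_inj f I J \<longleftrightarrow> finite I \<and> finite J \<and> f \<in> I \<rightarrow>\<^sub>E J \<and> inj_on f I"

text \<open>G I : the group G_I; Gf f I J : a representative of G_f for an injection f : I -> J;
  Gincl I J : the chosen homomorphism G_I^J for I \<subseteq> J.\<close>

definition weak_FI_group :: "(nat set \<Rightarrow> ('a, 'm) monoid_scheme)
    \<Rightarrow> ((nat \<Rightarrow> nat) \<Rightarrow> nat set \<Rightarrow> nat set \<Rightarrow> 'a \<Rightarrow> 'a)
    \<Rightarrow> (nat set \<Rightarrow> nat set \<Rightarrow> 'a \<Rightarrow> 'a) \<Rightarrow> bool" where
  "weak_FI_group G Gf Gincl \<longleftrightarrow>
     (\<forall>I. finite I \<longrightarrow> group (G I)) \<and>
     (\<forall>f I J. FI_inj f I J \<longrightarrow> Gf f I J \<in> hom (G I) (G J)) \<and>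
     (\<forall>I. finite I \<longrightarrow> conj_equiv (G I) (G I) (\<lambda>x. x) (Gf (\<lambda>i\<in>I. i) I I)) \<and>
     (\<forall>f g I J K. FI_inj f I J \<longrightarrow> FI_inj g J K \<longrightarrow>
        conj_equiv (G I) (G K) (Gf g J K \<circ> Gf f I J) (Gf (compose I g f) I K)) \<and>
     (\<forall>I J. finite J \<longrightarrow> I \<subseteq> J \<longrightarrow>
        Gincl I J \<in> hom (G I) (G J) \<and>
        conj_equiv (G I) (G J) (Gf (\<lambda>i\<in>I. i) I J) (Gincl I J)) \<and>
     (\<forall>I J K. finite K \<longrightarrow> I \<subseteq> J \<longrightarrow> J \<subseteq> K \<longrightarrow>
        (\<forall>x\<in>carrier (G I). Gincl J K (Gincl I J x) = Gincl I K x))"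

definition normal_weak_FI_subgroup :: "(nat set \<Rightarrow> 'a set)
    \<Rightarrow> (nat set \<Rightarrow> ('a, 'm) monoid_scheme)
    \<Rightarrow> ((nat \<Rightarrow> nat) \<Rightarrow> nat set \<Rightarrow> nat set \<Rightarrow> 'a \<Rightarrow> 'a)
    \<Rightarrow> (nat set \<Rightarrow> nat set \<Rightarrow> 'a \<Rightarrow> 'a) \<Rightarrow> bool" where
  "normal_weak_FI_subgroup H G Gf Gincl \<longleftrightarrow>
     (\<forall>I. finite I \<longrightarrow> H I \<lhd> G I) \<and>
     (\<forall>f I J. FI_inj f I J \<longrightarrow> Gf f I J ` H I \<subseteq> H J)"

definition H_at :: "(nat set \<Rightarrow> 'a set) \<Rightarrow> (nat set \<Rightarrow> nat set \<Rightarrow> 'a \<Rightarrow> 'a)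
    \<Rightarrow> nat set \<Rightarrow> nat set \<Rightarrow> 'a set" where
  "H_at H Gincl J I = Gincl I J ` H I"

definition H_le :: "(nat set \<Rightarrow> 'a set) \<Rightarrow> (nat set \<Rightarrow> ('a, 'm) monoid_scheme)
    \<Rightarrow> (nat set \<Rightarrow> nat set \<Rightarrow> 'a \<Rightarrow> 'a) \<Rightarrow> nat \<Rightarrow> nat set \<Rightarrow> 'a set" where
  "H_le H G Gincl N J = generate (G J)
     (\<Union>{ {g \<otimes>\<^bsub>G J\<^esub> h \<otimes>\<^bsub>G J\<^esub> inv\<^bsub>G J\<^esub> g | h. h \<in> H_at H Gincl J I} | g I.
          g \<in> carrier (G J) \<and> I \<subseteq> J \<and> card I \<le> N})"

end

theory Submission
  imports Defs
begin

text \<open>\<open>H\<^sup>\<le>\<^sup>N\<^sub>J\<close> is generated by the \<open>G\<^sub>J\<close>-conjugates of the union \<open>S\<^sub>J\<close> of the \<open>H\<^sub>J(I)\<close> with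
  \<open>|I| \<le> N\<close>, and a subgroup generated by a conjugation-invariant set is normal. For an
  injection \<open>f : I \<rightarrow> J\<close> and \<open>K \<subseteq> I\<close>, both \<open>G\<^sub>f \<circ> G\<^sub>K\<^sup>I\<close> and \<open>G\<^bsub>f(K)\<^esub>\<^sup>J \<circ> G\<^bsub>f|K\<^esub>\<close> represent
  \<open>G\<close> of the injection \<open>f|K : K \<rightarrow> J\<close>, so they differ by a conjugation in \<open>G\<^sub>J\<close>. Since
  \<open>G\<^bsub>f|K\<^esub>\<close> maps \<open>H\<^sub>K\<close> into \<open>H\<^bsub>f(K)\<^esub>\<close> and \<open>|f(K)| \<le> |K|\<close>, \<open>G\<^sub>f\<close> maps \<open>S\<^sub>I\<close> into the
  conjugates of \<open>S\<^sub>J\<close>, hence \<open>H\<^sup>\<le>\<^sup>N\<^sub>I\<close> into \<open>H\<^sup>\<le>\<^sup>N\<^sub>J\<close>.\<close>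

definition conjugates :: "('a, 'm) monoid_scheme \<Rightarrow> 'a set \<Rightarrow> 'a set" where
  "conjugates G A = {g \<otimes>\<^bsub>G\<^esub> a \<otimes>\<^bsub>G\<^esub> inv\<^bsub>G\<^esub> g | g a. g \<in> carrier G \<and> a \<in> A}"

lemma conjugatesI: "g \<in> carrier G \<Longrightarrow> a \<in> A \<Longrightarrow> g \<otimes>\<^bsub>G\<^esub> a \<otimes>\<^bsub>G\<^esub> inv\<^bsub>G\<^esub> g \<in> conjugates G A"
  unfolding conjugates_def by blast

lemma conjugatesE:
  assumes "x \<in> conjugates G A"
  obtains g a where "g \<in> carrier G" "a \<in> A" "x = g \<otimes>\<^bsub>G\<^esub> a \<otimes>\<^bsub>G\<^esub> inv\<^bsub>G\<^esub> g"
  using assms unfolding conjugates_def by blast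

lemma conjugates_mono: "A \<subseteq> B \<Longrightarrow> conjugates G A \<subseteq> conjugates G B"
  unfolding conjugates_def by blast

lemma (in group) conjugates_subset_carrier: "A \<subseteq> carrier G \<Longrightarrow> conjugates G A \<subseteq> carrier G"
  by (auto elim!: conjugatesE)

lemma (in group) conjugates_conjugates:
  assumes "A \<subseteq> carrier G"
  shows "conjugates G (conjugates G A) \<subseteq> conjugates G A"
proof
  fix x assume "x \<in> conjugates G (conjugates G A)"
  then obtain g k a where g: "g \<in> carrier G" and k: "k \<in> carrier G" and a: "a \<in> A"
    and x: "x = g \<otimes> (k \<otimes> a \<otimes> inv k) \<otimes> inv g"
    by (auto elim!: conjugatesE)
  have "x = (g \<otimes> k) \<otimes> a \<otimes> inv (g \<otimes> k)"
    using g k a assms by (auto simp: x m_assoc inv_mult_group)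
  then show "x \<in> conjugates G A"
    using g k a by (auto intro: conjugatesI)
qed

lemma (in group) conjugate_trans:
  "y \<in> conjugates G {x} \<Longrightarrow> z \<in> conjugates G {y} \<Longrightarrow> x \<in> carrier G \<Longrightarrow> z \<in> conjugates G {x}"
  using conjugates_mono[of "{y}" "conjugates G {x}" G] conjugates_conjugates[of "{x}"] by blast

lemma (in group) conjugate_sym:
  assumes "y \<in> conjugates G {x}" and "x \<in> carrier G"
  shows "x \<in> conjugates G {y}"
proof -
  obtain g where g: "g \<in> carrier G" and y: "y = g \<otimes> x \<otimes> inv g"
    using assms(1) by (auto elim: conjugatesE)
  have "x = inv g \<otimes> y \<otimes> inv (inv g)"
    using g assms(2) by (simp add: y m_assoc[symmetric]) (simp add: m_assoc)
  then show ?thesis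
    using g conjugatesI[of "inv g" G y "{y}"] by simp
qed

lemma (in group) normal_generate_conjugates:
  assumes "A \<subseteq> carrier G"
  shows "generate G (conjugates G A) \<lhd> G"
proof (rule normal_generateI)
  show "conjugates G A \<subseteq> carrier G"
    using conjugates_subset_carrier assms .
  fix x g assume "x \<in> conjugates G A" and "g \<in> carrier G"
  then have "g \<otimes> x \<otimes> inv g \<in> conjugates G (conjugates G A)"
    by (intro conjugatesI)
  then show "g \<otimes> x \<otimes> inv g \<in> conjugates G A"
    using conjugates_conjugates assms by blast
qed

lemma (in group_hom) image_conjugates:
  assumes "A \<subseteq> carrier G"
  shows "h ` conjugates G A \<subseteq> conjugates H (h ` A)"
proof
  fix y assume "y \<in> h ` conjugates G A"
  then obtain g a where g: "g \<in> carrier G" and a: "a \<in> A" and y: "y = h (g \<otimes> a \<otimes> inv g)"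
    by (auto elim!: conjugatesE)
  have "y = h g \<otimes>\<^bsub>H\<^esub> h a \<otimes>\<^bsub>H\<^esub> inv\<^bsub>H\<^esub> h g"
    using g a assms by (auto simp: y)
  then show "y \<in> conjugates H (h ` A)"
    using g a by (auto intro: conjugatesI)
qed

lemma (in group_hom) image_generate_conjugates:
  assumes "A \<subseteq> carrier G" and "B \<subseteq> carrier H" and "h ` A \<subseteq> conjugates H B"
  shows "h ` generate G (conjugates G A) \<subseteq> generate H (conjugates H B)"
proof -
  have "h ` generate G (conjugates G A) = generate H (h ` conjugates G A)"
    using generate_img G.conjugates_subset_carrier assms(1) by simp
  also have "\<dots> \<subseteq> generate H (conjugates H (conjugates H B))"
    using image_conjugates[OF assms(1)] conjugates_mono[OF assms(3)]
    by (intro H.mono_generate) blast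
  also have "\<dots> \<subseteq> generate H (conjugates H B)"
    by (intro H.mono_generate H.conjugates_conjugates assms(2))
  finally show ?thesis .
qed

lemma conj_equiv_conjugates:
  "conj_equiv A B \<phi> \<psi> \<Longrightarrow> x \<in> carrier A \<Longrightarrow> \<psi> x \<in> conjugates B {\<phi> x}"
  unfolding conj_equiv_def by (auto intro: conjugatesI)

locale weak_FI =
  fixes G :: "nat set \<Rightarrow> ('a, 'm) monoid_scheme"
    and Gf :: "(nat \<Rightarrow> nat) \<Rightarrow> nat set \<Rightarrow> nat set \<Rightarrow> 'a \<Rightarrow> 'a"
    and Gincl :: "nat set \<Rightarrow> nat set \<Rightarrow> 'a \<Rightarrow> 'a"
  assumes weak_FI_group: "weak_FI_group G Gf Gincl"
begin

lemma
  shows group: "finite I \<Longrightarrow> group (G I)"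
    and Gf_hom: "FI_inj f I J \<Longrightarrow> Gf f I J \<in> hom (G I) (G J)"
    and Gf_compose: "FI_inj f I J \<Longrightarrow> FI_inj g J K \<Longrightarrow>
      conj_equiv (G I) (G K) (Gf g J K \<circ> Gf f I J) (Gf (compose I g f) I K)"
    and Gincl_hom: "finite J \<Longrightarrow> I \<subseteq> J \<Longrightarrow> Gincl I J \<in> hom (G I) (G J)"
    and Gincl_Gf: "finite J \<Longrightarrow> I \<subseteq> J \<Longrightarrow>
      conj_equiv (G I) (G J) (Gf (\<lambda>i\<in>I. i) I J) (Gincl I J)"
  using weak_FI_group unfolding weak_FI_group_def by simp_all

lemma group_hom_Gf: "FI_inj f I J \<Longrightarrow> group_hom (G I) (G J) (Gf f I J)"
  using group Gf_hom unfolding FI_inj_def by (simp add: group_hom_def group_hom_axioms_def)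

lemma group_hom_Gincl: "finite J \<Longrightarrow> I \<subseteq> J \<Longrightarrow> group_hom (G I) (G J) (Gincl I J)"
  using group[OF finite_subset] group Gincl_hom
  by (simp add: group_hom_def group_hom_axioms_def)

lemma Gf_compose_conjugate:
  "FI_inj f I J \<Longrightarrow> FI_inj g J K \<Longrightarrow> x \<in> carrier (G I) \<Longrightarrow>
   Gf (compose I g f) I K x \<in> conjugates (G K) {Gf g J K (Gf f I J x)}"
  using conj_equiv_conjugates[OF Gf_compose] by simp

lemma Gincl_conjugate:
  "finite J \<Longrightarrow> I \<subseteq> J \<Longrightarrow> x \<in> carrier (G I) \<Longrightarrow>
   Gincl I J x \<in> conjugates (G J) {Gf (\<lambda>i\<in>I. i) I J x}"
  using conj_equiv_conjugates[OF Gincl_Gf] .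

lemma Gf_Gincl_conjugate:
  assumes f: "FI_inj f I J" and KI: "K \<subseteq> I" and h: "h \<in> carrier (G K)"
  shows "Gf f I J (Gincl K I h) \<in> conjugates (G J) {Gincl (f ` K) J (Gf (restrict f K) K (f ` K) h)}"
proof -
  have fin: "finite I" "finite J" "finite K" "finite (f ` K)" and fKJ: "f ` K \<subseteq> J"
    using f KI finite_subset unfolding FI_inj_def by auto
  interpret GJ: group "G J" using group fin by blast
  define fK where "fK = restrict f K"
  have incl_K: "FI_inj (\<lambda>i\<in>K. i) K I"
    using fin KI by (auto simp: FI_inj_def)
  have incl_fK: "FI_inj (\<lambda>i\<in>f ` K. i) (f ` K) J"
    using fin fKJ by (auto simp: FI_inj_def)
  have fK: "FI_inj fK K (f ` K)"
    using f fin KI by (auto simp: FI_inj_def fK_def inj_on_def)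
  have "compose K f (\<lambda>i\<in>K. i) = fK" "compose K (\<lambda>i\<in>f ` K. i) fK = fK"
    by (auto simp: compose_def fK_def)
  note via_I = Gf_compose_conjugate[OF incl_K f h, unfolded this(1)]
   and via_fK = Gf_compose_conjugate[OF fK incl_fK h, unfolded this(2)]
  interpret Gf_hom: group_hom "G I" "G J" "Gf f I J" using group_hom_Gf f .
  interpret incl_hom: group_hom "G K" "G I" "Gf (\<lambda>i\<in>K. i) K I" using group_hom_Gf incl_K .
  interpret fK_hom: group_hom "G K" "G (f ` K)" "Gf fK K (f ` K)" using group_hom_Gf fK .
  interpret incl_fK_hom: group_hom "G (f ` K)" "G J" "Gf (\<lambda>i\<in>f ` K. i) (f ` K) J"
    using group_hom_Gf incl_fK .
  interpret Gincl_fK: group_hom "G (f ` K)" "G J" "Gincl (f ` K) J"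
    using group_hom_Gincl fin fKJ by blast
  let ?h' = "Gf fK K (f ` K) h"
  have "Gf f I J (Gincl K I h) \<in> Gf f I J ` conjugates (G I) {Gf (\<lambda>i\<in>K. i) K I h}"
    using Gincl_conjugate[OF fin(1) KI h] by blast
  then have "Gf f I J (Gincl K I h) \<in> conjugates (G J) {Gf f I J (Gf (\<lambda>i\<in>K. i) K I h)}"
    using Gf_hom.image_conjugates[of "{Gf (\<lambda>i\<in>K. i) K I h}"] h by auto
  moreover have "Gf f I J (Gf (\<lambda>i\<in>K. i) K I h) \<in> conjugates (G J) {Gf fK K J h}"
    using GJ.conjugate_sym via_I h by simp
  moreover note via_fK
  moreover have "Gf (\<lambda>i\<in>f ` K. i) (f ` K) J ?h' \<in> conjugates (G J) {Gincl (f ` K) J ?h'}"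
    using GJ.conjugate_sym Gincl_conjugate[OF fin(2) fKJ] h by simp
  ultimately show ?thesis
    unfolding fK_def[symmetric] using h
    by (meson GJ.conjugate_trans Gf_hom.hom_closed Gincl_fK.hom_closed fK_hom.hom_closed
        incl_hom.hom_closed)
qed

end

definition H_le_gens :: "(nat set \<Rightarrow> 'a set) \<Rightarrow> (nat set \<Rightarrow> nat set \<Rightarrow> 'a \<Rightarrow> 'a)
    \<Rightarrow> nat \<Rightarrow> nat set \<Rightarrow> 'a set" where
  "H_le_gens H Gincl N J = \<Union>{H_at H Gincl J I | I. I \<subseteq> J \<and> card I \<le> N}"

lemma H_le_eq_generate_conjugates:
  "H_le H G Gincl N J = generate (G J) (conjugates (G J) (H_le_gens H Gincl N J))"
  unfolding H_le_def H_le_gens_def conjugates_def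
  by (rule arg_cong[where f = "generate (G J)"]) blast

locale weak_FI_normal = weak_FI +
  fixes H :: "nat set \<Rightarrow> 'a set"
  assumes normal_weak_FI_subgroup: "normal_weak_FI_subgroup H G Gf Gincl"
begin

lemma
  shows normal_H: "finite I \<Longrightarrow> H I \<lhd> G I"
    and Gf_H: "FI_inj f I J \<Longrightarrow> Gf f I J ` H I \<subseteq> H J"
  using normal_weak_FI_subgroup unfolding normal_weak_FI_subgroup_def by simp_all

lemma H_subset_carrier: "finite I \<Longrightarrow> H I \<subseteq> carrier (G I)"
  using normal_H normal_imp_subgroup subgroup.subset by metis

lemma H_le_gens_subset_carrier:
  assumes "finite J"
  shows "H_le_gens H Gincl N J \<subseteq> carrier (G J)"
proof -
  have "Gincl I J ` H I \<subseteq> carrier (G J)" if "I \<subseteq> J" for I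
    using group_hom.hom_closed[OF group_hom_Gincl[OF assms that]]
      H_subset_carrier finite_subset[OF that assms] by blast
  then show ?thesis
    unfolding H_le_gens_def H_at_def by blast
qed

lemma Gf_H_le_gens:
  assumes f: "FI_inj f I J"
  shows "Gf f I J ` H_le_gens H Gincl N I \<subseteq> conjugates (G J) (H_le_gens H Gincl N J)"
proof
  fix y assume "y \<in> Gf f I J ` H_le_gens H Gincl N I"
  then obtain K h where KI: "K \<subseteq> I" and card: "card K \<le> N" and h: "h \<in> H K"
    and y: "y = Gf f I J (Gincl K I h)"
    unfolding H_le_gens_def H_at_def by blast
  have fin: "finite K" "finite I"
    using f KI finite_subset unfolding FI_inj_def by auto
  have restrict: "FI_inj (restrict f K) K (f ` K)"
    using f fin KI by (auto simp: FI_inj_def inj_on_def)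
  have "Gf (restrict f K) K (f ` K) h \<in> H (f ` K)"
    using Gf_H[OF restrict] h by blast
  moreover have "f ` K \<subseteq> J" and "card (f ` K) \<le> N"
    using f KI card card_image_le[OF fin(1), of f] unfolding FI_inj_def by auto
  ultimately have "{Gincl (f ` K) J (Gf (restrict f K) K (f ` K) h)} \<subseteq> H_le_gens H Gincl N J"
    unfolding H_le_gens_def H_at_def by (intro subsetI UnionI[of "Gincl (f ` K) J ` H (f ` K)"]) auto
  moreover have "y \<in> conjugates (G J) {Gincl (f ` K) J (Gf (restrict f K) K (f ` K) h)}"
    unfolding y using Gf_Gincl_conjugate[OF f KI] H_subset_carrier[OF fin(1)] h by blast
  ultimately show "y \<in> conjugates (G J) (H_le_gens H Gincl N J)"
    using conjugates_mono by blast
qed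

end

theorem lemma2p19:
  fixes G :: "nat set \<Rightarrow> ('a, 'm) monoid_scheme"
    and Gf :: "(nat \<Rightarrow> nat) \<Rightarrow> nat set \<Rightarrow> nat set \<Rightarrow> 'a \<Rightarrow> 'a"
    and Gincl :: "nat set \<Rightarrow> nat set \<Rightarrow> 'a \<Rightarrow> 'a"
    and H :: "nat set \<Rightarrow> 'a set"
    and N :: nat
  assumes "weak_FI_group G Gf Gincl"
    and "normal_weak_FI_subgroup H G Gf Gincl"
  shows "normal_weak_FI_subgroup (H_le H G Gincl N) G Gf Gincl"
proof -
  interpret weak_FI_normal G Gf Gincl H
    using assms by unfold_locales
  show ?thesis
    unfolding normal_weak_FI_subgroup_def H_le_eq_generate_conjugates
  proof (intro conjI allI impI)
    fix J :: "nat set" assume "finite J"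
    then show "generate (G J) (conjugates (G J) (H_le_gens H Gincl N J)) \<lhd> G J"
      by (intro group.normal_generate_conjugates group H_le_gens_subset_carrier)
  next
    fix f I J assume f: "FI_inj f I J"
    then have "finite I" "finite J"
      unfolding FI_inj_def by auto
    then show "Gf f I J ` generate (G I) (conjugates (G I) (H_le_gens H Gincl N I))
        \<subseteq> generate (G J) (conjugates (G J) (H_le_gens H Gincl N J))"
      by (intro group_hom.image_generate_conjugates group_hom_Gf f
          H_le_gens_subset_carrier Gf_H_le_gens)
  qed
qed

end
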